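(* Let $X$ be a normed space with unit sphere $S_X$ and closed unit ball $B_X$, and kernel $k(x,y)=\|x-y\|$. Then $q(S_X,S_X)=q(S_X,B_X)$ and $\overline{M}(S_X,S_X)=\overline{M}(S_X,B_X)$.
   Context: For $H,L\subset X$: $U^\mu(x)=\int\|x-y\|\,d\mu(y)$; $q(H,L):=\inf_{\mu\in\mathfrak{M}_1(H)}\sup_{x\in L}U^\mu(x)$, where $\mathfrak{M}_1(H)$ is the set of regular Borel probability measures on $X$ (norm topology) concentrated on $H$; $\overline{M}_n(H,L):=\inf_{w_1,\dots,w_n\in H}\sup_{x\in L}\frac1n\sum_{j=1}^n\|x-w_j\|$ and $\overline{M}(H,L):=\lim_{n\to\infty}\overline{M}_n(H,L)=\inf_n\overline{M}_n(H,L)$. *)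

theory Defs
  imports "HOL-Probability.Probability"
begin

definition regular_borel_prob :: "'a::real_normed_vector measure \<Rightarrow> bool" where
  "regular_borel_prob M \<longleftrightarrow>
     sets M = sets borel \<and> prob_space M \<and>
     (\<forall>A\<in>sets M. emeasure M A = (SUP K\<in>{K. compact K \<and> K \<subseteq> A}. emeasure M K)) \<and>
     (\<forall>A\<in>sets M. emeasure M A = (INF U\<in>{U. open U \<and> A \<subseteq> U}. emeasure M U))"

definition concentrated_on :: "'a measure \<Rightarrow> 'a set \<Rightarrow> bool" where
  "concentrated_on M H \<longleftrightarrow> (\<exists>N\<in>null_sets M. space M - H \<subseteq> N)"

definition prob_measures_on :: "'a::real_normed_vector set \<Rightarrow> 'a measure set" where
  "prob_measures_on H = {M. regular_borel_prob M \<and> concentrated_on M H}"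

definition potential :: "'a::real_normed_vector measure \<Rightarrow> 'a \<Rightarrow> ennreal" where
  "potential M x = (\<integral>\<^sup>+ y. ennreal (norm (x - y)) \<partial>M)"

definition q_const :: "'a::real_normed_vector set \<Rightarrow> 'a set \<Rightarrow> ennreal" where
  "q_const H L = (INF M\<in>prob_measures_on H. SUP x\<in>L. potential M x)"

definition Mbar_n :: "nat \<Rightarrow> 'a::real_normed_vector set \<Rightarrow> 'a set \<Rightarrow> ennreal" where
  "Mbar_n n H L = (INF w\<in>{w::nat \<Rightarrow> 'a. \<forall>j\<in>{1..n}. w j \<in> H}.
       SUP x\<in>L. ennreal ((1 / real n) * (\<Sum>j=1..n. norm (x - w j))))"

definition Mbar :: "'a::real_normed_vector set \<Rightarrow> 'a set \<Rightarrow> ennreal" where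
  "Mbar H L = (INF n\<in>{1..}. Mbar_n n H L)"

end

theory Submission
  imports Defs
begin

text \<open>For a fixed measure \<open>\<mu>\<close> (resp. fixed points \<open>w\<^sub>1, \<dots>, w\<^sub>n\<close>) the function
  \<open>x \<mapsto> U\<^sup>\<mu>(x)\<close> (resp. \<open>x \<mapsto> (1/n) \<Sum>\<^sub>j \<parallel>x - w\<^sub>j\<parallel>\<close>) is convex, being an average of the
  convex functions \<open>x \<mapsto> \<parallel>x - y\<parallel>\<close>. A convex function, or merely a quasiconvex one, has the
  same supremum on the closed ball as on the sphere: every interior point lies on a chord of the
  sphere, found by moving along a line through it in both directions until the sphere is hit.
  So the inner suprema over \<open>S\<^sub>X\<close> and \<open>B\<^sub>X\<close> agree term by term, and hence so do the infima.
  If \<open>X = {0}\<close> the sphere is empty and all four quantities are \<open>\<infinity>\<close>.\<close>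

definition quasiconvex_on :: "'a::real_vector set \<Rightarrow> ('a \<Rightarrow> 'b::linorder) \<Rightarrow> bool" where
  "quasiconvex_on S f \<longleftrightarrow> convex S \<and>
    (\<forall>x\<in>S. \<forall>y\<in>S. \<forall>u\<ge>0. \<forall>v\<ge>0. u + v = 1 \<longrightarrow> f (u *\<^sub>R x + v *\<^sub>R y) \<le> max (f x) (f y))"

lemma quasiconvex_onD:
  "quasiconvex_on S f \<Longrightarrow> x \<in> S \<Longrightarrow> y \<in> S \<Longrightarrow> 0 \<le> u \<Longrightarrow> 0 \<le> v \<Longrightarrow> u + v = 1 \<Longrightarrow>
    f (u *\<^sub>R x + v *\<^sub>R y) \<le> max (f x) (f y)"
  by (simp add: quasiconvex_on_def)

lemma convex_on_imp_quasiconvex_on: "convex_on S f \<Longrightarrow> quasiconvex_on S f"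
  by (simp add: quasiconvex_on_def convex_lower convex_on_imp_convex)

lemma quasiconvex_on_mono_comp:
  assumes "quasiconvex_on S f" "mono g"
  shows "quasiconvex_on S (\<lambda>x. g (f x))"
  using assms by (auto simp: quasiconvex_on_def max_of_mono monoD)

lemma convex_on_sum_fun:
  assumes "convex S" "\<And>i. i \<in> I \<Longrightarrow> convex_on S (f i)"
  shows "convex_on S (\<lambda>x. \<Sum>i\<in>I. f i x)"
  using assms(2)
proof (induction I rule: infinite_finite_induct)
  case (insert i I)
  then show ?case by (simp add: convex_on_add)
qed (simp_all add: convex_on_const assms(1))

lemma ray_meets_sphere:
  fixes a x e :: "'a::real_normed_vector"
  assumes "x \<in> cball a r" "norm e = 1"
  obtains s where "s \<ge> 0" "x + s *\<^sub>R e \<in> sphere a r"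
proof -
  have "dist a x \<le> r"
    using assms(1) by simp
  then have "r \<ge> 0"
    using zero_le_dist[of a x] by linarith
  then have "2 * r = dist (x + (2 * r) *\<^sub>R e) x"
    using assms(2) by (simp add: dist_norm)
  also have "\<dots> \<le> dist (x + (2 * r) *\<^sub>R e) a + dist a x"
    by (rule dist_triangle)
  finally have "r \<le> dist a (x + (2 * r) *\<^sub>R e)"
    using \<open>dist a x \<le> r\<close> by (simp add: dist_commute)
  moreover have "continuous_on {0..2 * r} (\<lambda>s. dist a (x + s *\<^sub>R e))"
    by (intro continuous_intros)
  moreover have "dist a (x + 0 *\<^sub>R e) \<le> r" "0 \<le> 2 * r"
    using \<open>dist a x \<le> r\<close> \<open>r \<ge> 0\<close> by auto
  ultimately obtain s where "0 \<le> s" "dist a (x + s *\<^sub>R e) = r"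
    using IVT'[of "\<lambda>s. dist a (x + s *\<^sub>R e)" 0 r "2 * r"] by auto
  then show thesis using that by simp
qed

lemma ball_in_chord_of_sphere:
  fixes a x e :: "'a::real_normed_vector"
  assumes x: "x \<in> ball a r" and "e \<noteq> 0"
  obtains y z u v where "y \<in> sphere a r" "z \<in> sphere a r" "u \<ge> 0" "v \<ge> 0" "u + v = 1"
    "x = u *\<^sub>R y + v *\<^sub>R z"
proof -
  have e: "norm (sgn e) = 1"
    using \<open>e \<noteq> 0\<close> by (simp add: norm_sgn)
  obtain s where s: "s \<ge> 0" "x + s *\<^sub>R sgn e \<in> sphere a r"
    using ray_meets_sphere[of x a r "sgn e"] x e by auto
  obtain t where t: "t \<ge> 0" "x + t *\<^sub>R (- sgn e) \<in> sphere a r"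
    using ray_meets_sphere[of x a r "- sgn e"] x e by auto
  have "s + t > 0"
    using s t x by (cases "s = 0"; cases "t = 0") auto
  then have "x = (t / (s + t)) *\<^sub>R (x + s *\<^sub>R sgn e) + (s / (s + t)) *\<^sub>R (x + t *\<^sub>R (- sgn e))"
    by (simp add: algebra_simps scaleR_add_left [symmetric] add_divide_distrib [symmetric])
  moreover have "t / (s + t) + s / (s + t) = 1"
    using \<open>s + t > 0\<close> by (simp add: add_divide_distrib [symmetric])
  ultimately show thesis
    using that[OF s(2) t(2), of "t / (s + t)" "s / (s + t)"] s(1) t(1) by simp
qed

lemma SUP_sphere_eq_SUP_cball:
  fixes f :: "'a::real_normed_vector \<Rightarrow> 'b::complete_linorder"
  assumes f: "quasiconvex_on (cball a r) f" and "sphere a r \<noteq> {}"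
  shows "(SUP x\<in>sphere a r. f x) = (SUP x\<in>cball a r. f x)"
proof (rule antisym)
  show "(SUP x\<in>sphere a r. f x) \<le> (SUP x\<in>cball a r. f x)"
    by (rule SUP_subset_mono) auto
  show "(SUP x\<in>cball a r. f x) \<le> (SUP x\<in>sphere a r. f x)"
  proof (rule SUP_least)
    fix x assume x: "x \<in> cball a r"
    show "f x \<le> (SUP x\<in>sphere a r. f x)"
    proof (cases "x \<in> sphere a r")
      case True
      then show ?thesis by (rule SUP_upper)
    next
      case False
      with x have "x \<in> ball a r" by auto
      obtain p where "p \<in> sphere a r"
        using \<open>sphere a r \<noteq> {}\<close> by blast
      with \<open>x \<in> ball a r\<close> have "p - a \<noteq> 0"
        by auto
      then obtain y z u v where yz: "y \<in> sphere a r" "z \<in> sphere a r"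
        and uv: "u \<ge> 0" "v \<ge> 0" "u + v = 1" "x = u *\<^sub>R y + v *\<^sub>R z"
        using ball_in_chord_of_sphere[OF \<open>x \<in> ball a r\<close>] by metis
      have "f x \<le> max (f y) (f z)"
        using quasiconvex_onD[OF f _ _ uv(1-3)] yz uv(4) by auto
      also have "\<dots> \<le> (SUP x\<in>sphere a r. f x)"
        using yz by (auto intro: SUP_upper)
      finally show ?thesis .
    qed
  qed
qed

lemma convex_on_norm_minus: "convex S \<Longrightarrow> convex_on S (\<lambda>x. norm (x - c))"
  using convex_on_dist[of S c] by (simp add: dist_norm norm_minus_commute)

lemma potential_convex_combination:
  fixes M :: "'a::real_normed_vector measure"
  assumes M: "sets M = sets borel" and uv: "u \<ge> 0" "v \<ge> 0" "u + v = 1"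
  shows "potential M (u *\<^sub>R x + v *\<^sub>R y) \<le> ennreal u * potential M x + ennreal v * potential M y"
proof -
  have meas: "(\<lambda>w. ennreal (norm (z - w))) \<in> borel_measurable M" for z :: 'a
    unfolding measurable_cong_sets[OF M refl]
    by (intro borel_measurable_continuous_onI continuous_on_ennreal continuous_intros)
  have "ennreal (norm (u *\<^sub>R x + v *\<^sub>R y - w))
      \<le> ennreal u * ennreal (norm (x - w)) + ennreal v * ennreal (norm (y - w))" for w
  proof -
    have "norm (u *\<^sub>R x + v *\<^sub>R y - w) \<le> u * norm (x - w) + v * norm (y - w)"
      using convex_on_norm_minus[OF convex_UNIV, of w] uv unfolding convex_on_def by blast
    then have "ennreal (norm (u *\<^sub>R x + v *\<^sub>R y - w))
        \<le> ennreal (u * norm (x - w) + v * norm (y - w))"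
      by (rule ennreal_leI)
    also have "\<dots> = ennreal u * ennreal (norm (x - w)) + ennreal v * ennreal (norm (y - w))"
      using uv by (simp add: ennreal_plus ennreal_mult)
    finally show ?thesis .
  qed
  then have "potential M (u *\<^sub>R x + v *\<^sub>R y)
      \<le> (\<integral>\<^sup>+ w. ennreal u * ennreal (norm (x - w)) + ennreal v * ennreal (norm (y - w)) \<partial>M)"
    unfolding potential_def by (intro nn_integral_mono)
  also have "\<dots> = ennreal u * potential M x + ennreal v * potential M y"
    unfolding potential_def using meas by (simp add: nn_integral_add nn_integral_cmult)
  finally show ?thesis .
qed

lemma quasiconvex_on_potential:
  fixes M :: "'a::real_normed_vector measure"
  assumes "sets M = sets borel"
    and "convex S"
  shows "quasiconvex_on S (potential M)"
  unfolding quasiconvex_on_def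
proof (intro conjI ballI allI impI \<open>convex S\<close>)
  fix x y and u v :: real
  assume uv: "u \<ge> 0" "v \<ge> 0" "u + v = 1"
  let ?m = "max (potential M x) (potential M y)"
  have "potential M (u *\<^sub>R x + v *\<^sub>R y) \<le> ennreal u * potential M x + ennreal v * potential M y"
    by (rule potential_convex_combination[OF assms(1) uv])
  also have "\<dots> \<le> ennreal u * ?m + ennreal v * ?m"
    by (intro add_mono mult_left_mono) auto
  also have "\<dots> = ?m"
    using uv by (simp flip: distrib_right ennreal_plus)
  finally show "potential M (u *\<^sub>R x + v *\<^sub>R y) \<le> ?m" .
qed

lemma sets_prob_measures_on: "M \<in> prob_measures_on H \<Longrightarrow> sets M = sets borel"
  by (simp add: prob_measures_on_def regular_borel_prob_def)

lemma prob_measures_on_empty: "prob_measures_on {} = {}"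
proof -
  have False if "M \<in> prob_measures_on {}" for M
  proof -
    interpret prob_space M
      using that by (simp add: prob_measures_on_def regular_borel_prob_def)
    have "concentrated_on M {}"
      using that by (simp add: prob_measures_on_def)
    then obtain N where "N \<in> null_sets M" "space M \<subseteq> N"
      unfolding concentrated_on_def by auto
    then have "emeasure M (space M) = 0"
      by (meson emeasure_eq_0 null_setsD1 null_setsD2 sets.top)
    then show False
      using emeasure_space_1 by simp
  qed
  then show ?thesis
    by blast
qed

lemma q_const_sphere_eq_cball:
  assumes "sphere a r \<noteq> {}"
  shows "q_const H (sphere a r) = q_const H (cball a r)"
  unfolding q_const_def
proof (rule INF_cong[OF refl])
  fix M assume "M \<in> prob_measures_on H"
  then have "quasiconvex_on (cball a r) (potential M)"
    by (intro quasiconvex_on_potential sets_prob_measures_on convex_cball)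
  then show "(SUP x\<in>sphere a r. potential M x) = (SUP x\<in>cball a r. potential M x)"
    using assms by (rule SUP_sphere_eq_SUP_cball)
qed

lemma Mbar_sphere_eq_cball:
  assumes "sphere a r \<noteq> {}"
  shows "Mbar H (sphere a r) = Mbar H (cball a r)"
  unfolding Mbar_def Mbar_n_def
proof (intro INF_cong[OF refl] SUP_sphere_eq_SUP_cball[OF _ assms])
  fix n :: nat and w :: "nat \<Rightarrow> 'a"
  have "convex_on (cball a r) (\<lambda>x. \<Sum>j=1..n. norm (x - w j))"
    by (rule convex_on_sum_fun) (simp_all add: convex_on_norm_minus)
  then have "convex_on (cball a r) (\<lambda>x. 1 / real n * (\<Sum>j=1..n. norm (x - w j)))"
    by (rule convex_on_cmul[rotated]) simp
  then have "quasiconvex_on (cball a r) (\<lambda>x. 1 / real n * (\<Sum>j=1..n. norm (x - w j)))"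
    by (rule convex_on_imp_quasiconvex_on)
  then show "quasiconvex_on (cball a r) (\<lambda>x. ennreal (1 / real n * (\<Sum>j=1..n. norm (x - w j))))"
    by (rule quasiconvex_on_mono_comp) (simp add: mono_def ennreal_leI)
qed

lemma Mbar_empty: "Mbar {} (L :: 'a::real_normed_vector set) = \<top>"
proof -
  have "Mbar_n n {} L = \<top>" if "n \<ge> 1" for n
  proof -
    have "{w. \<forall>j\<in>{1..n}. w j \<in> ({} :: 'a set)} = {}"
      using that by auto
    then show ?thesis
      by (simp only: Mbar_n_def INF_empty)
  qed
  then show ?thesis
    unfolding Mbar_def INF_top_conv by simp
qed

theorem corollary3p8:
  shows "q_const (sphere (0::'a::real_normed_vector) 1) (sphere 0 1) = q_const (sphere (0::'a::real_normed_vector) 1) (cball 0 1)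
       \<and> Mbar (sphere (0::'a::real_normed_vector) 1) (sphere 0 1) = Mbar (sphere (0::'a::real_normed_vector) 1) (cball 0 1)"
proof (cases "sphere (0::'a) 1 = {}")
  case True
  show ?thesis
    unfolding True q_const_def prob_measures_on_empty Mbar_empty by simp
next
  case False
  then show ?thesis
    by (intro conjI q_const_sphere_eq_cball Mbar_sphere_eq_cball)
qed

end
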